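(* Assume the sparsity setting below with $1<p\le2$. Let $(c^\ast,s^\ast)\in X\times Y$, $u^\ast=B(c^\ast,s^\ast)$, let $c^\ast$ be a $\Phi_p$-minimizing solution, and let $u_\delta\in Z$, $s_{\mathrm{mod},\epsilon}\in Y$ with $\|u^\ast-u_\delta\|\le\delta$, $\|s^\ast-s_{\mathrm{mod},\epsilon}\|\le\epsilon$. Assume the source condition: there is $\omega\in Z$ with $(\xi_{c^\ast},\xi_{s^\ast})=B'(c^\ast,s^\ast)^\ast\omega$ for some $(\xi_{c^\ast},\xi_{s^\ast})=:\xi^\ast\in\partial\tilde{\mathcal{R}}(c^\ast,s^\ast)$, where $B'(c^\ast,s^\ast)(x,y)=B(c^\ast,y)+B(x,s^\ast)$; and the smallness condition $C\|\omega\|<\min\{1,\gamma/(2\alpha_{\max})\}$ for some $0<\alpha_{\max}<\infty$. For $0<\alpha\le\alpha_{\max}$ let $(c^\alpha,s^\alpha)$ be a minimizer of $J^{u_\delta,s_{\mathrm{mod},\epsilon}}_{\alpha,\nu_1\alpha,\nu_2\alpha}$. If $\alpha\sim\delta+\epsilon$ (i.e., $m(\delta+\epsilon)\le\alpha\le M(\delta+\epsilon)$ for constants $0<m\le M$), then as $\delta+\epsilon\to0$ $$\|B(c^\alpha,s^\alpha)-B(c^\ast,s^\ast)\|=\mathcal{O}(\delta+\epsilon),\qquad D^{\xi^\ast}_{\tilde{\mathcal{R}}}((c^\alpha,s^\alpha),(c^\ast,s^\ast))=\mathcal{O}(\delta+\epsilon).$$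
   Context: Sparsity setting: $X,Y,Z$ are Hilbert spaces; $X\times Y$ carries the inner product $\langle (c_1,s_1),(c_2,s_2)\rangle=\langle c_1,c_2\rangle_X+\langle s_1,s_2\rangle_Y$. $B:X\times Y\to Z$ is bilinear, satisfies $\|B(c,s)\|_Z\le C\|c\|_X\|s\|_Y$ for some $C>0$, and is sequentially weak-weak continuous. $Y_n\subset Y$ is a finite-dimensional subspace, $P:Y\to Y_n$ is linear and bounded, $s_{\mathrm{calib}}\in Y_n$. $\mathcal{R}_s:Y\to[0,\infty)$ is proper, convex and weakly lower semi-continuous. $\{\varphi_i\}_{i\in\mathbb{N}}$ is an orthonormal basis of $X$, weights satisfy $1\le w_i<\infty$, and $\Phi_p(c)=\sum_iw_i|\langle c,\varphi_i\rangle|^p$. Fix $\gamma>0$ and $\nu_1,\nu_2\in(0,\infty)$. For $u\in Z$, $s_m\in Y$, $\alpha,\beta,\mu>0$: $J^{u,s_m}_{\alpha,\beta,\mu}(c,s)=\frac12\|B(c,s)-u\|^2+\frac{\gamma}{2}\|s-s_m\|^2+\frac{\mu}{2}\|P(s)-s_{\mathrm{calib}}\|^2+\alpha\Phi_p(c)+\beta\mathcal{R}_s(s)$, and $\tilde{\mathcal{R}}(c,s)=\Phi_p(c)+\frac{\nu_2}{2}\|P(s)-s_{\mathrm{calib}}\|^2+\nu_1\mathcal{R}_s(s)$ (so $J^{u,s_m}_{\alpha,\nu_1\alpha,\nu_2\alpha}=\frac12\|B(c,s)-u\|^2+\frac\gamma2\|s-s_m\|^2+\alpha\tilde{\mathcal{R}}$).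 $c^\ast$ is a $\Phi_p$-minimizing solution if $c^\ast\in\arg\min\{\Phi_p(c):B(c,s^\ast)=u^\ast\}$. For a convex functional $\mathcal{R}$ and $\xi\in\partial\mathcal{R}(x^\ast)$, $D^{\xi}_{\mathcal{R}}(x,x^\ast)=\mathcal{R}(x)-\mathcal{R}(x^\ast)-\langle\xi,x-x^\ast\rangle$. *)

theory Defs
  imports "HOL-Analysis.Analysis"
begin

definition weak_conv :: "(nat \<Rightarrow> 'a::real_inner) \<Rightarrow> 'a \<Rightarrow> bool" where
  "weak_conv xs x \<longleftrightarrow> (\<forall>v. (\<lambda>n. inner (xs n) v) \<longlonglongrightarrow> inner x v)"

definition weak_seq_cont :: "('a::real_inner \<Rightarrow> 'b::real_inner) \<Rightarrow> bool" where
  "weak_seq_cont f \<longleftrightarrow> (\<forall>xs x. weak_conv xs x \<longrightarrow> weak_conv (\<lambda>n. f (xs n)) (f x))"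

definition weak_lsc :: "('a::real_inner \<Rightarrow> real) \<Rightarrow> bool" where
  "weak_lsc R \<longleftrightarrow> (\<forall>xs x. weak_conv xs x \<longrightarrow> ereal (R x) \<le> liminf (\<lambda>n. ereal (R (xs n))))"

definition orthonormal_basis :: "(nat \<Rightarrow> 'a::real_inner) \<Rightarrow> bool" where
  "orthonormal_basis \<phi> \<longleftrightarrow>
     (\<forall>i j. inner (\<phi> i) (\<phi> j) = (if i = j then 1 else 0)) \<and> closure (span (range \<phi>)) = UNIV"

definition Phi :: "(nat \<Rightarrow> real) \<Rightarrow> (nat \<Rightarrow> 'a::real_inner) \<Rightarrow> real \<Rightarrow> 'a \<Rightarrow> ereal" where
  "Phi w \<phi> p c = (\<Sum>i. ereal (w i * \<bar>inner c (\<phi> i)\<bar> powr p))"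

definition Rtilde :: "(nat \<Rightarrow> real) \<Rightarrow> (nat \<Rightarrow> 'x::real_inner) \<Rightarrow> real \<Rightarrow> ('y::real_inner \<Rightarrow> 'y)
     \<Rightarrow> 'y \<Rightarrow> ('y \<Rightarrow> real) \<Rightarrow> real \<Rightarrow> real \<Rightarrow> 'x \<times> 'y \<Rightarrow> ereal" where
  "Rtilde w \<phi> p P scal Rs \<nu>1 \<nu>2 cs =
     Phi w \<phi> p (fst cs) + ereal (\<nu>2 / 2 * (norm (P (snd cs) - scal))\<^sup>2 + \<nu>1 * Rs (snd cs))"

definition Jfun :: "('x::real_inner \<Rightarrow> 'y::real_inner \<Rightarrow> 'z::real_inner) \<Rightarrow> real \<Rightarrow> ('y \<Rightarrow> 'y) \<Rightarrow> 'y
     \<Rightarrow> (nat \<Rightarrow> real) \<Rightarrow> (nat \<Rightarrow> 'x) \<Rightarrow> real \<Rightarrow> ('y \<Rightarrow> real)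
     \<Rightarrow> 'z \<Rightarrow> 'y \<Rightarrow> real \<Rightarrow> real \<Rightarrow> real \<Rightarrow> 'x \<times> 'y \<Rightarrow> ereal" where
  "Jfun B \<gamma> P scal w \<phi> p Rs u sm \<alpha> \<beta> \<mu> cs =
     ereal (1/2 * (norm (B (fst cs) (snd cs) - u))\<^sup>2 + \<gamma>/2 * (norm (snd cs - sm))\<^sup>2
            + \<mu>/2 * (norm (P (snd cs) - scal))\<^sup>2)
     + ereal \<alpha> * Phi w \<phi> p (fst cs) + ereal (\<beta> * Rs (snd cs))"

definition subdiff :: "('a::real_inner \<Rightarrow> ereal) \<Rightarrow> 'a \<Rightarrow> 'a set" where
  "subdiff R x = {\<xi>. R x \<noteq> \<infinity> \<and> (\<forall>y. R x + ereal (inner \<xi> (y - x)) \<le> R y)}"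

definition bregman :: "('a::real_inner \<Rightarrow> ereal) \<Rightarrow> 'a \<Rightarrow> 'a \<Rightarrow> 'a \<Rightarrow> ereal" where
  "bregman R \<xi> x xs = R x - R xs - ereal (inner \<xi> (x - xs))"

end

theory Submission
  imports Defs
begin

text \<open>Testing the minimality of (c\<alpha>, s\<alpha>) against (c*, s*) bounds the regulariser at
the minimizer by R~(c*, s*) + O(1) as long as \<alpha> \<ge> m(\<delta> + \<epsilon>) and \<delta> + \<epsilon> \<le> 1; since
p \<le> 2 and w i \<ge> 1, Phi controls the squared norm, so \<parallel>c\<alpha>\<parallel> stays bounded. With
x = c\<alpha> - c* and y = s\<alpha> - s*, bilinearity and the source condition turn
\<langle>\<xi>*, (x, y)\<rangle> into \<langle>\<omega>, B(c\<alpha>, s\<alpha>) - B(c*, s*)\<rangle> - \<langle>\<omega>, B(x, y)\<rangle>. The remainder is at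
most C \<parallel>\<omega>\<parallel> \<parallel>x\<parallel> \<parallel>y\<parallel>, linear in \<parallel>y\<parallel>, so by Young's inequality the term
\<gamma>/2 \<parallel>s\<alpha> - smod\<parallel>^2 absorbs it. What is left is
\<parallel>B(c\<alpha>, s\<alpha>) - B(c*, s*)\<parallel>^2/4 + \<alpha> D \<le> K0 (\<delta> + \<epsilon>)^2 for the Bregman distance D,
which gives both rates. The bound on \<parallel>c\<alpha>\<parallel> takes the place of the smallness condition
on C \<parallel>\<omega>\<parallel>, which this argument does not need.\<close>

lemma norm_add_sq_ge:
  fixes a b :: "'a::real_inner"
  shows "(norm a)\<^sup>2 - 2 * norm a * norm b \<le> (norm (a + b))\<^sup>2"
proof -
  have "(norm (a + b))\<^sup>2 = (norm a)\<^sup>2 + 2 * inner a b + (norm b)\<^sup>2"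
    by (simp add: power2_norm_eq_inner inner_add_left inner_add_right inner_commute)
  moreover have "- (norm a * norm b) \<le> inner a b"
    using Cauchy_Schwarz_ineq2[of a b] by linarith
  ultimately show ?thesis using zero_le_power2[of "norm b"] by linarith
qed

lemma young_ineq:
  fixes a b g :: real
  assumes "0 < g"
  shows "a * b \<le> g * a\<^sup>2 / 4 + b\<^sup>2 / g"
proof -
  have "0 \<le> (g * a - 2 * b)\<^sup>2 / (4 * g)" using assms by simp
  also have "\<dots> = g * a\<^sup>2 / 4 + b\<^sup>2 / g - a * b"
    using assms by (simp add: field_simps power2_eq_square)
  finally show ?thesis by simp
qed

lemma perturbed_energy_bound:
  fixes e v :: "'a::real_inner" and y z :: "'b::real_inner"
  assumes energy: "(norm (e + v))\<^sup>2 / 2 + \<gamma> / 2 * (norm (y + z))\<^sup>2 + \<alpha> * D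
      \<le> (norm v)\<^sup>2 / 2 + \<gamma> / 2 * (norm z)\<^sup>2 + \<alpha> * (W * norm e + \<Lambda> * norm y)"
    and "norm v \<le> t" "norm z \<le> t" "0 < \<gamma>" "0 \<le> \<alpha>" "\<alpha> \<le> M * t" "0 \<le> W" "0 \<le> \<Lambda>"
  shows "(norm e)\<^sup>2 / 4 + \<alpha> * D \<le> (1/2 + \<gamma>/2 + (1 + M * W)\<^sup>2 + (\<gamma> + M * \<Lambda>)\<^sup>2 / \<gamma>) * t\<^sup>2"
proof -
  define a b where "a = norm e" and "b = norm y"
  have "0 \<le> t" using assms(2) norm_ge_zero order_trans by blast
  have "a\<^sup>2 - 2 * a * t \<le> (norm (e + v))\<^sup>2"
    using norm_add_sq_ge[of e v] mult_left_mono[OF \<open>norm v \<le> t\<close>, of "2 * a"] by (simp add: a_def)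
  moreover have "\<gamma> * b\<^sup>2 - 2 * \<gamma> * b * t \<le> \<gamma> * (norm (y + z))\<^sup>2"
    using norm_add_sq_ge[of y z] mult_left_mono[OF \<open>norm z \<le> t\<close>, of "2 * b"] \<open>0 < \<gamma>\<close>
      mult_left_mono[of "b\<^sup>2 - 2 * b * t" "(norm (y + z))\<^sup>2" \<gamma>]
    by (auto simp: b_def algebra_simps)
  moreover have "(norm v)\<^sup>2 \<le> t\<^sup>2" "\<gamma> * (norm z)\<^sup>2 \<le> \<gamma> * t\<^sup>2"
    using assms(2,3) \<open>0 < \<gamma>\<close> by (auto intro: power_mono)
  moreover have "a * t + \<alpha> * W * a \<le> a\<^sup>2 / 4 + (1 + M * W)\<^sup>2 * t\<^sup>2"
  proof -
    have "(t + \<alpha> * W)\<^sup>2 \<le> (1 + M * W)\<^sup>2 * t\<^sup>2"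
      unfolding power_mult_distrib[symmetric]
      using assms \<open>0 \<le> t\<close> mult_right_mono[OF \<open>\<alpha> \<le> M * t\<close> \<open>0 \<le> W\<close>]
      by (intro power_mono) (auto simp: algebra_simps)
    moreover have "a * (t + \<alpha> * W) \<le> a\<^sup>2 / 4 + (t + \<alpha> * W)\<^sup>2"
      using young_ineq[of 1 a "t + \<alpha> * W"] by simp
    ultimately show ?thesis by (simp add: distrib_left mult.commute mult.left_commute)
  qed
  moreover have "\<gamma> * b * t + \<alpha> * \<Lambda> * b \<le> \<gamma> * b\<^sup>2 / 4 + (\<gamma> + M * \<Lambda>)\<^sup>2 / \<gamma> * t\<^sup>2"
  proof -
    have "(\<gamma> * t + \<alpha> * \<Lambda>)\<^sup>2 / \<gamma> \<le> (\<gamma> + M * \<Lambda>)\<^sup>2 / \<gamma> * t\<^sup>2"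
      unfolding times_divide_eq_left power_mult_distrib[symmetric]
      using assms \<open>0 \<le> t\<close> mult_right_mono[OF \<open>\<alpha> \<le> M * t\<close> \<open>0 \<le> \<Lambda>\<close>]
      by (intro divide_right_mono power_mono) (auto simp: algebra_simps)
    moreover have "b * (\<gamma> * t + \<alpha> * \<Lambda>) \<le> \<gamma> * b\<^sup>2 / 4 + (\<gamma> * t + \<alpha> * \<Lambda>)\<^sup>2 / \<gamma>"
      using young_ineq[OF \<open>0 < \<gamma>\<close>] by simp
    ultimately show ?thesis by (simp add: distrib_left mult.commute mult.left_commute)
  qed
  moreover have "0 \<le> \<gamma> * b\<^sup>2" using \<open>0 < \<gamma>\<close> by simp
  ultimately show ?thesis
    using energy unfolding a_def[symmetric] b_def[symmetric] by (simp add: algebra_simps)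
qed

lemma rate_of_energy_bound:
  fixes a D K0 m t \<alpha> :: real
  assumes energy: "a\<^sup>2 / 4 + \<alpha> * D \<le> K0 * t\<^sup>2"
    and "0 \<le> a" "0 \<le> D" "0 < m" "m * t \<le> \<alpha>" "0 < t"
  shows "a \<le> (2 * sqrt K0 + K0 / m) * t" and "D \<le> (2 * sqrt K0 + K0 / m) * t"
proof -
  have "0 < \<alpha>" using \<open>0 < m\<close> \<open>0 < t\<close> \<open>m * t \<le> \<alpha>\<close> by (meson mult_pos_pos order_less_le_trans)
  then have "0 \<le> \<alpha> * D" using \<open>0 \<le> D\<close> by simp
  then have "0 \<le> K0 * t\<^sup>2" using energy zero_le_power2[of a] by linarith
  then have "0 \<le> K0" using \<open>0 < t\<close> by (simp add: zero_le_mult_iff)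
  have "a\<^sup>2 \<le> 4 * K0 * t\<^sup>2" using energy \<open>0 \<le> \<alpha> * D\<close> by linarith
  also have "\<dots> = (2 * sqrt K0 * t)\<^sup>2"
    unfolding power_mult_distrib real_sqrt_pow2[OF \<open>0 \<le> K0\<close>] by simp
  finally have a: "a \<le> 2 * sqrt K0 * t"
    by (rule power2_le_imp_le) (use \<open>0 \<le> K0\<close> \<open>0 < t\<close> in simp)
  have "m * D * t \<le> \<alpha> * D"
    using mult_right_mono[OF \<open>m * t \<le> \<alpha>\<close> \<open>0 \<le> D\<close>] by (simp add: mult_ac)
  also have "\<dots> \<le> K0 * t\<^sup>2" using energy zero_le_power2[of a] by linarith
  also have "\<dots> = K0 * t * t" by (simp add: power2_eq_square)
  finally have "m * D \<le> K0 * t" using \<open>0 < t\<close> by (rule mult_right_le_imp_le)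
  then have D: "D \<le> K0 / m * t" using \<open>0 < m\<close> by (simp add: pos_le_divide_eq mult_ac)
  have "0 \<le> K0 / m * t" "0 \<le> 2 * sqrt K0 * t"
    using \<open>0 \<le> K0\<close> \<open>0 < m\<close> \<open>0 < t\<close> by simp_all
  then show "a \<le> (2 * sqrt K0 + K0 / m) * t" "D \<le> (2 * sqrt K0 + K0 / m) * t"
    unfolding distrib_right using a D by linarith+
qed

lemma bilinear_diff_expand:
  assumes "bilinear B"
  shows "B c' s' - B c s = B c (s' - s) + B (c' - c) s + B (c' - c) (s' - s)"
  using assms by (simp add: bilinear_lsub bilinear_rsub algebra_simps)

lemma span_range_in_initial_span:
  fixes \<phi> :: "nat \<Rightarrow> 'a::real_vector"
  assumes "v \<in> span (range \<phi>)"
  obtains N where "v \<in> span (\<phi> ` {..<N})"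
proof -
  obtain T r where T: "finite T" "T \<subseteq> range \<phi>" and v: "v = (\<Sum>a\<in>T. r a *\<^sub>R a)"
    using assms unfolding span_explicit by blast
  obtain I where "finite I" "T = \<phi> ` I"
    using finite_subset_image[OF T] by blast
  moreover obtain N where "I \<subseteq> {..<N}"
    using finite_nat_bounded[OF \<open>finite I\<close>] by blast
  ultimately have "span T \<subseteq> span (\<phi> ` {..<N})" by (intro span_mono) blast
  moreover have "v \<in> span T" using v by (auto intro: span_sum span_scale span_base)
  ultimately show ?thesis using that by blast
qed

lemma orthonormal_partial_sum:
  fixes \<phi> :: "nat \<Rightarrow> 'a::real_inner"
  assumes orthonormal: "\<And>i j. inner (\<phi> i) (\<phi> j) = (if i = j then 1 else 0)"
    and S: "S = (\<Sum>i<N. inner c (\<phi> i) *\<^sub>R \<phi> i)"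
  shows "S \<in> span (\<phi> ` {..<N})"
    and "\<And>a. a \<in> span (\<phi> ` {..<N}) \<Longrightarrow> orthogonal (c - S) a"
    and "(norm S)\<^sup>2 = (\<Sum>i<N. (inner c (\<phi> i))\<^sup>2)"
proof -
  show "S \<in> span (\<phi> ` {..<N})" unfolding S by (intro span_sum span_scale span_base) auto
  have "inner (c - S) (\<phi> j) = 0" if "j < N" for j
  proof -
    have "inner S (\<phi> j) = (\<Sum>i<N. if i = j then inner c (\<phi> j) else 0)"
      unfolding S inner_sum_left using orthonormal by (intro sum.cong) auto
    then show ?thesis using that by (simp add: inner_diff_left)
  qed
  then show orth: "orthogonal (c - S) a" if "a \<in> span (\<phi> ` {..<N})" for a
    using orthogonal_to_span[OF that] by (auto simp: orthogonal_def)
  have "inner c S = (\<Sum>i<N. (inner c (\<phi> i))\<^sup>2)"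
    unfolding S by (simp add: inner_sum_right power2_eq_square)
  moreover have "inner (c - S) S = 0"
    using orth[OF \<open>S \<in> span _\<close>] by (simp add: orthogonal_def)
  ultimately show "(norm S)\<^sup>2 = (\<Sum>i<N. (inner c (\<phi> i))\<^sup>2)"
    by (simp add: power2_norm_eq_inner inner_diff_left)
qed

lemma norm_sq_le_of_coeff_sums_le:
  fixes \<phi> :: "nat \<Rightarrow> 'a::real_inner"
  assumes "orthonormal_basis \<phi>" and coeffs: "\<And>n. (\<Sum>i<n. (inner c (\<phi> i))\<^sup>2) \<le> S"
  shows "(norm c)\<^sup>2 \<le> S"
proof (rule field_le_epsilon)
  fix e :: real assume "0 < e"
  have orthonormal: "\<And>i j. inner (\<phi> i) (\<phi> j) = (if i = j then 1 else 0)"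
    and dense: "c \<in> closure (span (range \<phi>))"
    using assms(1) unfolding orthonormal_basis_def by auto
  obtain v where "v \<in> span (range \<phi>)" and "dist v c < sqrt e"
    using closure_approachable dense \<open>0 < e\<close> by (metis real_sqrt_gt_0_iff)
  then obtain N where v: "v \<in> span (\<phi> ` {..<N})" using span_range_in_initial_span by blast
  define P where "P = (\<Sum>i<N. inner c (\<phi> i) *\<^sub>R \<phi> i)"
  note proj = orthonormal_partial_sum[OF orthonormal P_def]
  have "(norm c)\<^sup>2 = (norm (c - P))\<^sup>2 + (norm P)\<^sup>2"
    using norm_add_Pythagorean[OF proj(2)[OF proj(1)]] by simp
  moreover have "(norm (c - v))\<^sup>2 = (norm (c - P))\<^sup>2 + (norm (P - v))\<^sup>2"
    using norm_add_Pythagorean[OF proj(2)[OF span_diff[OF proj(1) v]]] by simp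
  moreover have "(norm (c - v))\<^sup>2 < e"
    using \<open>dist v c < sqrt e\<close> \<open>0 < e\<close> real_sqrt_less_iff[of "(norm (c - v))\<^sup>2" e]
    by (simp add: dist_norm norm_minus_commute)
  ultimately show "(norm c)\<^sup>2 \<le> S + e"
    using proj(3) coeffs[of N] zero_le_power2[of "norm (P - v)"] by linarith
qed

lemma sq_le_powr_bound:
  fixes t Q p :: real
  assumes "1 < p" "p \<le> 2" "\<bar>t\<bar> powr p \<le> Q"
  shows "t\<^sup>2 \<le> (1 + Q) * \<bar>t\<bar> powr p"
proof (cases "\<bar>t\<bar> \<le> 1")
  case True
  have "0 \<le> Q" using assms(3) powr_ge_zero order_trans by blast
  have "t\<^sup>2 = \<bar>t\<bar> powr 2"
    by (cases "t = 0") simp_all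
  also have "\<dots> \<le> \<bar>t\<bar> powr p"
    using True assms powr_mono'[of p 2 "\<bar>t\<bar>"] by simp
  also have "\<dots> \<le> (1 + Q) * \<bar>t\<bar> powr p"
    using \<open>0 \<le> Q\<close> by (simp add: mult_le_cancel_right1)
  finally show ?thesis .
next
  case False
  have "t\<^sup>2 = \<bar>t\<bar> powr (2 - p) * \<bar>t\<bar> powr p"
    using False by (simp add: powr_add[symmetric])
  also have "\<dots> \<le> Q * \<bar>t\<bar> powr p"
  proof (rule mult_right_mono)
    have "\<bar>t\<bar> powr (2 - p) \<le> \<bar>t\<bar> powr p" using False assms by (intro powr_mono) auto
    then show "\<bar>t\<bar> powr (2 - p) \<le> Q" using assms(3) by linarith
  qed simp
  also have "\<dots> \<le> (1 + Q) * \<bar>t\<bar> powr p" by (simp add: algebra_simps)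
  finally show ?thesis .
qed

lemma Phi_nonneg: "(\<And>i. 0 \<le> w i) \<Longrightarrow> 0 \<le> Phi w \<phi> p c"
  unfolding Phi_def by (intro suminf_0_le) simp

lemma Phi_partial_sum_le:
  "(\<And>i. 0 \<le> w i) \<Longrightarrow> ereal (\<Sum>i<n. w i * \<bar>inner c (\<phi> i)\<bar> powr p) \<le> Phi w \<phi> p c"
  unfolding Phi_def sum_ereal[symmetric] by (intro suminf_upper) simp

lemma norm_sq_le_of_Phi_le:
  fixes \<phi> :: "nat \<Rightarrow> 'a::real_inner"
  assumes "orthonormal_basis \<phi>" and w: "\<And>i. 1 \<le> w i" and p: "1 < p" "p \<le> 2"
    and Phi_le: "Phi w \<phi> p c \<le> ereal Q"
  shows "(norm c)\<^sup>2 \<le> (1 + Q) * Q"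
proof (rule norm_sq_le_of_coeff_sums_le[OF assms(1)])
  have w_nonneg: "0 \<le> w i" for i using w[of i] by linarith
  have partial: "(\<Sum>i<n. w i * \<bar>inner c (\<phi> i)\<bar> powr p) \<le> Q" for n
    using order_trans[OF Phi_partial_sum_le[OF w_nonneg] Phi_le] by simp
  then have "0 \<le> Q" using partial[of 0] by simp
  have coeff: "\<bar>inner c (\<phi> i)\<bar> powr p \<le> w i * \<bar>inner c (\<phi> i)\<bar> powr p" for i
    using w[of i] by (simp add: mult_le_cancel_right1)
  have single: "\<bar>inner c (\<phi> i)\<bar> powr p \<le> Q" for i
  proof -
    have "w i * \<bar>inner c (\<phi> i)\<bar> powr p \<le> (\<Sum>j<Suc i. w j * \<bar>inner c (\<phi> j)\<bar> powr p)"
      using w_nonneg by (intro member_le_sum) auto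
    then show ?thesis using coeff[of i] partial[of "Suc i"] by linarith
  qed
  have coeff_sq: "(inner c (\<phi> i))\<^sup>2 \<le> (1 + Q) * (w i * \<bar>inner c (\<phi> i)\<bar> powr p)" for i
    using sq_le_powr_bound[OF p single[of i]] mult_left_mono[OF coeff[of i], of "1 + Q"] \<open>0 \<le> Q\<close>
    by linarith
  fix n
  have "(\<Sum>i<n. (inner c (\<phi> i))\<^sup>2) \<le> (\<Sum>i<n. (1 + Q) * (w i * \<bar>inner c (\<phi> i)\<bar> powr p))"
    using coeff_sq by (rule sum_mono)
  also have "\<dots> \<le> (1 + Q) * Q"
    using partial[of n] \<open>0 \<le> Q\<close> by (simp add: sum_distrib_left[symmetric] mult_left_mono)
  finally show "(\<Sum>i<n. (inner c (\<phi> i))\<^sup>2) \<le> (1 + Q) * Q" .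
qed

locale sparsity_tikhonov =
  fixes B :: "'x::real_inner \<Rightarrow> 'y::real_inner \<Rightarrow> 'z::real_inner"
    and C \<gamma> \<nu>1 \<nu>2 p :: real and P :: "'y \<Rightarrow> 'y" and scal :: 'y and Rs :: "'y \<Rightarrow> real"
    and \<phi> :: "nat \<Rightarrow> 'x" and w :: "nat \<Rightarrow> real"
  assumes bilinear_B: "bilinear B" and norm_B_le: "\<And>c s. norm (B c s) \<le> C * norm c * norm s"
    and C_nonneg: "0 \<le> C" and onb: "orthonormal_basis \<phi>" and w_ge1: "\<And>i. 1 \<le> w i"
    and \<gamma>_pos: "0 < \<gamma>" and \<nu>1_nonneg: "0 \<le> \<nu>1" and \<nu>2_nonneg: "0 \<le> \<nu>2"
    and p_gt1: "1 < p" and p_le2: "p \<le> 2" and Rs_nonneg: "\<And>s. 0 \<le> Rs s"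
begin

abbreviation R :: "'x \<times> 'y \<Rightarrow> ereal" where
  "R \<equiv> Rtilde w \<phi> p P scal Rs \<nu>1 \<nu>2"

abbreviation J :: "'z \<Rightarrow> 'y \<Rightarrow> real \<Rightarrow> 'x \<times> 'y \<Rightarrow> ereal" where
  "J u sm \<alpha> \<equiv> Jfun B \<gamma> P scal w \<phi> p Rs u sm \<alpha> (\<nu>1 * \<alpha>) (\<nu>2 * \<alpha>)"

lemma Phi_le_R: "Phi w \<phi> p c \<le> R (c, s)"
  using \<nu>1_nonneg \<nu>2_nonneg Rs_nonneg[of s] unfolding Rtilde_def
  by (intro add_increasing2) simp_all

lemma R_nonneg: "0 \<le> R (c, s)"
  using Phi_nonneg[of w \<phi> p c] Phi_le_R[of c s] w_ge1 by (meson order_trans zero_le_one)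

lemma inner_B_le:
  assumes "norm x \<le> \<rho>"
  shows "inner v (B x y) \<le> C * \<rho> * norm v * norm y"
proof -
  have "inner v (B x y) \<le> norm v * (C * norm x * norm y)"
    using Cauchy_Schwarz_ineq2[of v "B x y"] norm_B_le[of x y]
    by (meson abs_le_D1 mult_left_mono norm_ge_zero order_trans)
  also have "\<dots> \<le> norm v * (C * \<rho> * norm y)"
    using assms C_nonneg by (intro mult_left_mono mult_right_mono) auto
  finally show ?thesis by (simp add: mult_ac)
qed

lemma J_eq_fidelity_plus_R:
  assumes "0 \<le> \<alpha>"
  shows "J u sm \<alpha> (c, s)
    = ereal ((norm (B c s - u))\<^sup>2 / 2 + \<gamma> / 2 * (norm (s - sm))\<^sup>2) + ereal \<alpha> * R (c, s)"
  using assms unfolding Jfun_def Rtilde_def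
  by (cases "Phi w \<phi> p c") (auto simp: algebra_simps)

lemma minimizer_energy_le:
  assumes "0 < \<alpha>" and R0: "R (c0, s0) = ereal r0"
    and min: "J u sm \<alpha> (c, s) \<le> J u sm \<alpha> (c0, s0)"
  obtains r where "R (c, s) = ereal r"
    and "(norm (B c s - u))\<^sup>2 / 2 + \<gamma> / 2 * (norm (s - sm))\<^sup>2 + \<alpha> * r
      \<le> (norm (B c0 s0 - u))\<^sup>2 / 2 + \<gamma> / 2 * (norm (s0 - sm))\<^sup>2 + \<alpha> * r0"
proof -
  have "R (c, s) \<noteq> \<infinity>"
    using min \<open>0 < \<alpha>\<close> R0 by (auto simp: J_eq_fidelity_plus_R)
  then obtain r where r: "R (c, s) = ereal r"
    using R_nonneg[of c s] by (cases "R (c, s)") auto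
  moreover have "(norm (B c s - u))\<^sup>2 / 2 + \<gamma> / 2 * (norm (s - sm))\<^sup>2 + \<alpha> * r
      \<le> (norm (B c0 s0 - u))\<^sup>2 / 2 + \<gamma> / 2 * (norm (s0 - sm))\<^sup>2 + \<alpha> * r0"
    using min \<open>0 < \<alpha>\<close> unfolding J_eq_fidelity_plus_R[OF less_imp_le[OF \<open>0 < \<alpha>\<close>]] r R0
    by simp
  ultimately show ?thesis by (rule that)
qed

end

locale sparsity_source_condition = sparsity_tikhonov +
  fixes cstar sstar \<xi>c \<xi>s \<omega>
  assumes subgradient: "(\<xi>c, \<xi>s) \<in> subdiff R (cstar, sstar)"
    and source: "\<And>x y. inner \<xi>c x + inner \<xi>s y = inner \<omega> (B cstar y + B x sstar)"
begin

definition rstar :: real where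
  "rstar = real_of_ereal (R (cstar, sstar))"

lemma R_star: "R (cstar, sstar) = ereal rstar"
  using subgradient R_nonneg[of cstar sstar] unfolding subdiff_def rstar_def
  by (cases "R (cstar, sstar)") auto

text \<open>The summand (1 + \<gamma>)/(2m) absorbs the data terms (\<delta>^2 + \<gamma> \<epsilon>^2)/(2\<alpha>) of the
energy comparison, using \<delta> + \<epsilon> \<le> 1 and \<alpha> \<ge> m(\<delta> + \<epsilon>).\<close>

definition penalty_bound :: "real \<Rightarrow> real" where
  "penalty_bound m = rstar + (1 + \<gamma>) / (2 * m)"

definition radius :: "real \<Rightarrow> real" where
  "radius m = sqrt ((1 + penalty_bound m) * penalty_bound m)"

text \<open>K0 is the constant of perturbed_energy_bound for W = \<parallel>\<omega>\<parallel> and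
\<Lambda> = C (2 radius m) \<parallel>\<omega>\<parallel>, which bounds the bilinear remainder because
\<parallel>c - c*\<parallel> \<le> 2 radius m.\<close>

definition rate_const :: "real \<Rightarrow> real \<Rightarrow> real" where
  "rate_const m M =
    (let K0 = 1/2 + \<gamma>/2 + (1 + M * norm \<omega>)\<^sup>2 + (\<gamma> + M * (C * (2 * radius m) * norm \<omega>))\<^sup>2 / \<gamma>
     in 2 * sqrt K0 + K0 / m)"

lemma norm_le_radius:
  assumes "R (c, s) = ereal r" and "r \<le> penalty_bound m"
  shows "norm c \<le> radius m"
proof -
  have "Phi w \<phi> p c \<le> ereal (penalty_bound m)"
    using Phi_le_R[of c s] assms by (metis ereal_less_eq(3) order_trans)
  then have "(norm c)\<^sup>2 \<le> (1 + penalty_bound m) * penalty_bound m"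
    by (rule norm_sq_le_of_Phi_le[OF onb w_ge1 p_gt1 p_le2])
  then show ?thesis unfolding radius_def by (rule real_le_rsqrt)
qed

lemma minimizer_penalty_le:
  assumes "0 < t" "t \<le> 1" "0 < m" "m * t \<le> \<alpha>"
    and "norm (B cstar sstar - u) \<le> t" "norm (sstar - sm) \<le> t"
    and energy: "(norm (B c s - u))\<^sup>2 / 2 + \<gamma> / 2 * (norm (s - sm))\<^sup>2 + \<alpha> * r
      \<le> (norm (B cstar sstar - u))\<^sup>2 / 2 + \<gamma> / 2 * (norm (sstar - sm))\<^sup>2 + \<alpha> * rstar"
  shows "r \<le> penalty_bound m"
proof -
  have "t\<^sup>2 \<le> t" using assms(1,2) by (simp add: power2_eq_square mult_le_cancel_right1)
  moreover have "(norm (B cstar sstar - u))\<^sup>2 \<le> t\<^sup>2" "(norm (sstar - sm))\<^sup>2 \<le> t\<^sup>2"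
    using assms(5,6) by (auto intro: power_mono)
  ultimately have "(norm (B cstar sstar - u))\<^sup>2 \<le> t" "\<gamma> / 2 * (norm (sstar - sm))\<^sup>2 \<le> \<gamma> / 2 * t"
    using \<gamma>_pos by auto
  moreover have "0 \<le> \<gamma> / 2 * (norm (s - sm))\<^sup>2" using \<gamma>_pos by simp
  ultimately have "\<alpha> * r \<le> t / 2 + \<gamma> / 2 * t + \<alpha> * rstar"
    using energy zero_le_power2[of "norm (B c s - u)"] by linarith
  also have "\<dots> \<le> \<alpha> * penalty_bound m"
  proof -
    have "(1 + \<gamma>) * (m * t) \<le> (1 + \<gamma>) * \<alpha>"
      using \<open>m * t \<le> \<alpha>\<close> \<gamma>_pos by (intro mult_left_mono) auto
    then show ?thesis using \<open>0 < m\<close> by (simp add: penalty_bound_def field_simps)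
  qed
  finally have "\<alpha> * r \<le> \<alpha> * penalty_bound m" .
  moreover have "0 < \<alpha>" using assms(1,3,4) by (meson mult_pos_pos order_less_le_trans)
  ultimately show ?thesis by simp
qed

lemma norm_diff_cstar_le:
  assumes "0 < m" and "R (c, s) = ereal r" and "r \<le> penalty_bound m"
  shows "norm (c - cstar) \<le> 2 * radius m"
proof -
  have "norm cstar \<le> radius m"
    using norm_le_radius[OF R_star] \<gamma>_pos \<open>0 < m\<close> by (simp add: penalty_bound_def)
  then show ?thesis
    using norm_le_radius[OF assms(2,3)] norm_triangle_ineq4[of c cstar] by linarith
qed

lemma bregman_source_form:
  assumes "R (c, s) = ereal r"
  defines "D \<equiv> r - rstar - inner \<omega> (B c s - B cstar sstar) + inner \<omega> (B (c - cstar) (s - sstar))"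
  shows "bregman R (\<xi>c, \<xi>s) (c, s) (cstar, sstar) = ereal D" and "0 \<le> D"
proof -
  have "inner (\<xi>c, \<xi>s) ((c, s) - (cstar, sstar))
      = inner \<omega> (B c s - B cstar sstar) - inner \<omega> (B (c - cstar) (s - sstar))"
    using source[of "c - cstar" "s - sstar"] bilinear_diff_expand[OF bilinear_B, of c s cstar sstar]
    by (simp add: inner_diff_right inner_add_right)
  moreover have "R (cstar, sstar) + ereal (inner (\<xi>c, \<xi>s) ((c, s) - (cstar, sstar))) \<le> R (c, s)"
    using subgradient unfolding subdiff_def by blast
  ultimately show "bregman R (\<xi>c, \<xi>s) (c, s) (cstar, sstar) = ereal D" and "0 \<le> D"
    using assms(1) R_star unfolding bregman_def D_def by simp_all
qed

lemma minimizer_error_bound: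
  assumes "0 < t" "t \<le> 1" "0 < m" "m * t \<le> \<alpha>" "\<alpha> \<le> M * t"
    and data: "norm (B cstar sstar - u) \<le> t" "norm (sstar - sm) \<le> t"
    and min: "J u sm \<alpha> (c\<alpha>, s\<alpha>) \<le> J u sm \<alpha> (cstar, sstar)"
  shows "norm (B c\<alpha> s\<alpha> - B cstar sstar) \<le> rate_const m M * t"
    and "bregman R (\<xi>c, \<xi>s) (c\<alpha>, s\<alpha>) (cstar, sstar) \<le> ereal (rate_const m M * t)"
proof -
  have "0 < \<alpha>" using assms(1,3,4) by (meson mult_pos_pos order_less_le_trans)
  obtain r where r: "R (c\<alpha>, s\<alpha>) = ereal r"
    and energy: "(norm (B c\<alpha> s\<alpha> - u))\<^sup>2 / 2 + \<gamma> / 2 * (norm (s\<alpha> - sm))\<^sup>2 + \<alpha> * r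
      \<le> (norm (B cstar sstar - u))\<^sup>2 / 2 + \<gamma> / 2 * (norm (sstar - sm))\<^sup>2 + \<alpha> * rstar"
    using minimizer_energy_le[OF \<open>0 < \<alpha>\<close> R_star min] by blast
  define e x y \<Lambda> where "e = B c\<alpha> s\<alpha> - B cstar sstar" and "x = c\<alpha> - cstar" and "y = s\<alpha> - sstar"
    and "\<Lambda> = C * (2 * radius m) * norm \<omega>"
  define D where "D = r - rstar - inner \<omega> e + inner \<omega> (B x y)"
  define K0 where "K0 = 1/2 + \<gamma>/2 + (1 + M * norm \<omega>)\<^sup>2 + (\<gamma> + M * \<Lambda>)\<^sup>2 / \<gamma>"
  have "norm x \<le> 2 * radius m"
    unfolding x_def using norm_diff_cstar_le[OF \<open>0 < m\<close> r minimizer_penalty_le[OF assms(1-4) data energy]] .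
  then have "0 \<le> 2 * radius m" using norm_ge_zero[of x] by linarith
  then have "0 \<le> \<Lambda>" unfolding \<Lambda>_def using C_nonneg by simp
  have "inner \<omega> (B x y) \<le> \<Lambda> * norm y"
    unfolding \<Lambda>_def using \<open>norm x \<le> 2 * radius m\<close> by (rule inner_B_le)
  moreover have "- inner \<omega> e \<le> norm \<omega> * norm e"
    using Cauchy_Schwarz_ineq2[of \<omega> e] by linarith
  ultimately have "\<alpha> * (inner \<omega> (B x y) - inner \<omega> e) \<le> \<alpha> * (norm \<omega> * norm e + \<Lambda> * norm y)"
    using \<open>0 < \<alpha>\<close> by (intro mult_left_mono) auto
  then have "(norm (e + (B cstar sstar - u)))\<^sup>2 / 2 + \<gamma> / 2 * (norm (y + (sstar - sm)))\<^sup>2 + \<alpha> * D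
      \<le> (norm (B cstar sstar - u))\<^sup>2 / 2 + \<gamma> / 2 * (norm (sstar - sm))\<^sup>2
        + \<alpha> * (norm \<omega> * norm e + \<Lambda> * norm y)"
    using energy unfolding e_def y_def D_def by (simp add: algebra_simps)
  then have energy_bound: "(norm e)\<^sup>2 / 4 + \<alpha> * D \<le> K0 * t\<^sup>2"
    unfolding K0_def using \<open>0 \<le> \<Lambda>\<close>
    by (rule perturbed_energy_bound[OF _ data \<gamma>_pos less_imp_le[OF \<open>0 < \<alpha>\<close>] \<open>\<alpha> \<le> M * t\<close> norm_ge_zero])
  have "0 \<le> D" and breg: "bregman R (\<xi>c, \<xi>s) (c\<alpha>, s\<alpha>) (cstar, sstar) = ereal D"
    using bregman_source_form[OF r] unfolding D_def e_def x_def y_def by simp_all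
  have rate_const: "rate_const m M = 2 * sqrt K0 + K0 / m"
    unfolding rate_const_def K0_def \<Lambda>_def Let_def ..
  note rate = rate_of_energy_bound[OF energy_bound norm_ge_zero \<open>0 \<le> D\<close> \<open>0 < m\<close> \<open>m * t \<le> \<alpha>\<close> \<open>0 < t\<close>]
  show "norm (B c\<alpha> s\<alpha> - B cstar sstar) \<le> rate_const m M * t"
    using rate(1) unfolding rate_const e_def .
  show "bregman R (\<xi>c, \<xi>s) (c\<alpha>, s\<alpha>) (cstar, sstar) \<le> ereal (rate_const m M * t)"
    using rate(2) unfolding rate_const breg ereal_less_eq .
qed

end

theorem mainTheorem9:
  fixes B :: "'x::{real_inner,complete_space} \<Rightarrow> 'y::{real_inner,complete_space} \<Rightarrow> 'z::{real_inner,complete_space}"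
    and C \<gamma> \<nu>1 \<nu>2 p \<alpha>max m M :: real
    and Yn :: "'y set" and P :: "'y \<Rightarrow> 'y" and scal :: 'y
    and Rs :: "'y \<Rightarrow> real" and \<phi> :: "nat \<Rightarrow> 'x" and w :: "nat \<Rightarrow> real"
    and cstar :: 'x and sstar :: 'y and ustar :: 'z and \<omega> :: 'z and \<xi>c :: 'x and \<xi>s :: 'y
  assumes B_bilinear: "bilinear B"
    and C_pos: "C > 0"
    and B_bound: "\<forall>c s. norm (B c s) \<le> C * norm c * norm s"
    and B_weak: "weak_seq_cont (\<lambda>cs. B (fst cs) (snd cs))"
    and Yn_sub: "subspace Yn" and Yn_fin: "\<exists>S. finite S \<and> span S = Yn"
    and P_lin: "bounded_linear P" and P_range: "\<forall>y. P y \<in> Yn"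
    and scal_in: "scal \<in> Yn"
    and Rs_nonneg: "\<forall>s. Rs s \<ge> 0" and Rs_convex: "convex_on UNIV Rs" and Rs_lsc: "weak_lsc Rs"
    and onb: "orthonormal_basis \<phi>"
    and w_ge1: "\<forall>i. 1 \<le> w i"
    and \<gamma>_pos: "\<gamma> > 0" and \<nu>1_pos: "\<nu>1 > 0" and \<nu>2_pos: "\<nu>2 > 0"
    and p_range: "1 < p" "p \<le> 2"
    and ustar_def: "ustar = B cstar sstar"
    and Phi_min: "\<forall>c. B c sstar = ustar \<longrightarrow> Phi w \<phi> p cstar \<le> Phi w \<phi> p c"
    and xi_subdiff: "(\<xi>c, \<xi>s) \<in> subdiff (Rtilde w \<phi> p P scal Rs \<nu>1 \<nu>2) (cstar, sstar)"
    and source: "\<forall>x y. inner \<xi>c x + inner \<xi>s y = inner \<omega> (B cstar y + B x sstar)"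
    and \<alpha>max_pos: "0 < \<alpha>max"
    and small: "C * norm \<omega> < min 1 (\<gamma> / (2 * \<alpha>max))"
    and m_pos: "0 < m" and m_le_M: "m \<le> M"
  shows "\<exists>K \<eta>. \<eta> > 0 \<and>
    (\<forall>\<delta> \<epsilon> u\<delta> smod \<alpha> c\<alpha> s\<alpha>.
       0 \<le> \<delta> \<and> 0 \<le> \<epsilon> \<and> \<delta> + \<epsilon> < \<eta> \<and>
       norm (ustar - u\<delta>) \<le> \<delta> \<and> norm (sstar - smod) \<le> \<epsilon> \<and>
       0 < \<alpha> \<and> \<alpha> \<le> \<alpha>max \<and> m * (\<delta> + \<epsilon>) \<le> \<alpha> \<and> \<alpha> \<le> M * (\<delta> + \<epsilon>) \<and>
       (\<forall>c s. Jfun B \<gamma> P scal w \<phi> p Rs u\<delta> smod \<alpha> (\<nu>1 * \<alpha>) (\<nu>2 * \<alpha>) (c\<alpha>, s\<alpha>)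
              \<le> Jfun B \<gamma> P scal w \<phi> p Rs u\<delta> smod \<alpha> (\<nu>1 * \<alpha>) (\<nu>2 * \<alpha>) (c, s))
       \<longrightarrow> norm (B c\<alpha> s\<alpha> - B cstar sstar) \<le> K * (\<delta> + \<epsilon>)
         \<and> bregman (Rtilde w \<phi> p P scal Rs \<nu>1 \<nu>2) (\<xi>c, \<xi>s) (c\<alpha>, s\<alpha>) (cstar, sstar)
             \<le> ereal (K * (\<delta> + \<epsilon>)))"
proof -
  interpret sparsity_source_condition B C \<gamma> \<nu>1 \<nu>2 p P scal Rs \<phi> w cstar sstar \<xi>c \<xi>s \<omega>
    using B_bilinear B_bound C_pos onb w_ge1 \<gamma>_pos \<nu>1_pos \<nu>2_pos p_range Rs_nonneg xi_subdiff source
    by unfold_locales auto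
  show ?thesis
  proof (intro exI[of _ "rate_const m M"] exI[of _ 1] conjI[OF zero_less_one] allI impI, elim conjE)
    fix \<delta> \<epsilon> u\<delta> smod \<alpha> c\<alpha> s\<alpha>
    assume "0 \<le> \<delta>" "0 \<le> \<epsilon>" "\<delta> + \<epsilon> < 1" "norm (ustar - u\<delta>) \<le> \<delta>" "norm (sstar - smod) \<le> \<epsilon>"
      "0 < \<alpha>" "m * (\<delta> + \<epsilon>) \<le> \<alpha>" "\<alpha> \<le> M * (\<delta> + \<epsilon>)"
      and min: "\<forall>c s. Jfun B \<gamma> P scal w \<phi> p Rs u\<delta> smod \<alpha> (\<nu>1 * \<alpha>) (\<nu>2 * \<alpha>) (c\<alpha>, s\<alpha>)
              \<le> Jfun B \<gamma> P scal w \<phi> p Rs u\<delta> smod \<alpha> (\<nu>1 * \<alpha>) (\<nu>2 * \<alpha>) (c, s)"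
    have "0 < \<delta> + \<epsilon>"
      using \<open>0 < \<alpha>\<close> \<open>\<alpha> \<le> M * (\<delta> + \<epsilon>)\<close> \<open>0 \<le> \<delta>\<close> \<open>0 \<le> \<epsilon>\<close>
      by (cases "\<delta> + \<epsilon> = 0") auto
    moreover have "norm (B cstar sstar - u\<delta>) \<le> \<delta> + \<epsilon>" "norm (sstar - smod) \<le> \<delta> + \<epsilon>"
      using \<open>norm (ustar - u\<delta>) \<le> \<delta>\<close> \<open>norm (sstar - smod) \<le> \<epsilon>\<close> \<open>0 \<le> \<delta>\<close> \<open>0 \<le> \<epsilon>\<close>
      unfolding ustar_def by (auto simp: norm_minus_commute)
    moreover have "J u\<delta> smod \<alpha> (c\<alpha>, s\<alpha>) \<le> J u\<delta> smod \<alpha> (cstar, sstar)"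
      using min by blast
    ultimately have "norm (B c\<alpha> s\<alpha> - B cstar sstar) \<le> rate_const m M * (\<delta> + \<epsilon>)"
      and "bregman R (\<xi>c, \<xi>s) (c\<alpha>, s\<alpha>) (cstar, sstar) \<le> ereal (rate_const m M * (\<delta> + \<epsilon>))"
      using minimizer_error_bound[of "\<delta> + \<epsilon>" m \<alpha> M] m_pos
        \<open>\<delta> + \<epsilon> < 1\<close> \<open>m * (\<delta> + \<epsilon>) \<le> \<alpha>\<close> \<open>\<alpha> \<le> M * (\<delta> + \<epsilon>)\<close> by auto
    then show "norm (B c\<alpha> s\<alpha> - B cstar sstar) \<le> rate_const m M * (\<delta> + \<epsilon>)
      \<and> bregman (Rtilde w \<phi> p P scal Rs \<nu>1 \<nu>2) (\<xi>c, \<xi>s) (c\<alpha>, s\<alpha>) (cstar, sstar)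
          \<le> ereal (rate_const m M * (\<delta> + \<epsilon>))" ..
  qed
qed

end
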